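(* Consider a neutral evolutionary model on $N$ sites given by a replacement rule $p$ satisfying the fixation assumption described in the context. Let $\mathbf{a}_0=(1,2,\ldots,N)$ be the initial state of the ancestral Markov chain. Then for each site $i$, $$\rho_i=\lim_{t\to\infty}\Pr_{(\mathcal{A},\mathbf{a}_0)}\big[\mathbf{a}(t)=(i,\ldots,i)\big],$$ where $\mathbf{a}(t)$ is the state of the ancestral Markov chain at time $t$ started from $\mathbf{a}_0$.
   Context: There are $N$ sites $1,\ldots,N$. A replacement event is a pair $(R,\alpha)$ with $R\subseteq\{1,\ldots,N\}$ and $\alpha:R\to\{1,\ldots,N\}$. A replacement rule is a probability distribution $p(R,\alpha)$ on replacement events, independent of the state. For any finite alphabet $T$, the associated Markov chain on $T^N$ evolves as follows: at each time-step an event $(R,\alpha)$ is drawn with probability $p(R,\alpha)$ and the state $\mathbf{s}$ becomes $\mathbf{s}'$ with $s_i'=s_i$ if $i\notin R$ and $s_i'=s_{\alpha(i)}$ if $i\in R$. The evolutionary Markov chain $\mathcal{M}$ is this chain with alphabet $\{\mathrm{M},\mathrm{R}\}$; the ancestral Markov chain $\mathcal{A}$ is this chain with alphabet $\{1,\ldots,N\}$. Fixation assumption: there exist a site $i$ and a finite sequence of replacement events, each of positive probability, such that if these events occur consecutively (from any initial state) every site ends up carrying the symbol initially at site $i$. The site-specific fixation probability is $\rho_i=\lim_{t\to\infty}\Pr_{(\mathcal{M},\mathbf{m}_i)}[\mathbf{s}(t)=(\mathrm{M},\ldots,\mathrm{M})]$, where $\mathbf{m}_i$ is the state with M at site $i$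 and R at all other sites. *)

theory Defs
  imports "HOL-Probability.Probability"
begin

text \<open>A replacement event (R, alpha): R is the set of replaced sites, alpha i is the
  parent of site i (only values on R matter). Sites are 1..N; states are functions on nat,
  of which only the values on 1..N are relevant.\<close>

type_synonym event = "nat set \<times> (nat \<Rightarrow> nat)"

definition valid_event :: "nat \<Rightarrow> event \<Rightarrow> bool" where
  "valid_event N e \<longleftrightarrow> fst e \<subseteq> {1..N} \<and> (\<forall>i\<in>fst e. snd e i \<in> {1..N})"

definition apply_event :: "event \<Rightarrow> (nat \<Rightarrow> 'a) \<Rightarrow> (nat \<Rightarrow> 'a)" where
  "apply_event e s = (\<lambda>i. if i \<in> fst e then s (snd e i) else s i)"

definition replacement_rule :: "nat \<Rightarrow> event pmf \<Rightarrow> bool" where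
  "replacement_rule N p \<longleftrightarrow> (\<forall>e\<in>set_pmf p. valid_event N e)"

fun chain :: "event pmf \<Rightarrow> nat \<Rightarrow> (nat \<Rightarrow> 'a) \<Rightarrow> (nat \<Rightarrow> 'a) pmf" where
  "chain p 0 s = return_pmf s"
| "chain p (Suc t) s = bind_pmf (chain p t s) (\<lambda>s'. map_pmf (\<lambda>e. apply_event e s') p)"

definition apply_events :: "event list \<Rightarrow> (nat \<Rightarrow> 'a) \<Rightarrow> (nat \<Rightarrow> 'a)" where
  "apply_events es s = fold apply_event es s"

definition fixation_assumption :: "nat \<Rightarrow> event pmf \<Rightarrow> 'a itself \<Rightarrow> bool" where
  "fixation_assumption N p _ \<longleftrightarrow>
     (\<exists>i\<in>{1..N}. \<exists>es. (\<forall>e\<in>set es. pmf p e > 0) \<and>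
        (\<forall>s :: nat \<Rightarrow> 'a. \<forall>j\<in>{1..N}. apply_events es s j = s i))"

datatype MR = Mut | Res

definition m_state :: "nat \<Rightarrow> nat \<Rightarrow> MR" where
  "m_state i = (\<lambda>j. if j = i then Mut else Res)"

definition prob_all :: "nat \<Rightarrow> event pmf \<Rightarrow> (nat \<Rightarrow> 'a) \<Rightarrow> 'a \<Rightarrow> nat \<Rightarrow> real" where
  "prob_all N p s0 c t = measure_pmf.prob (chain p t s0) {s. \<forall>j\<in>{1..N}. s j = c}"

end

theory Submission
  imports Defs
begin

text \<open>Replacement events act on states by precomposition, so they commute with any relabelling
  of the alphabet. Hence the evolutionary chain started in \<open>m_state i\<close> is the image of the
  ancestral chain started in the identity state under the relabelling that sends ancestor \<open>i\<close>
  to \<open>Mut\<close> and every other ancestor to \<open>Res\<close>; at each time the event "all sites carry \<open>Mut\<close>"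
  is the preimage of "all sites descend from \<open>i\<close>", so both probabilities agree for all \<open>t\<close>.
  A monochromatic state is absorbing, so these probabilities are non-decreasing in \<open>t\<close> and
  bounded by 1, hence they converge.\<close>

lemma apply_event_comp: "apply_event e (f \<circ> s) = f \<circ> apply_event e s"
  by (auto simp: apply_event_def fun_eq_iff)

lemma chain_comp: "chain p t (f \<circ> s) = map_pmf (\<lambda>b. f \<circ> b) (chain p t s)"
proof (induction t)
  case 0
  then show ?case by simp
next
  case (Suc t)
  have "chain p (Suc t) (f \<circ> s)
      = bind_pmf (map_pmf (\<lambda>b. f \<circ> b) (chain p t s)) (\<lambda>s'. map_pmf (\<lambda>e. apply_event e s') p)"
    by (simp only: chain.simps Suc)
  also have "\<dots> = bind_pmf (chain p t s) (\<lambda>s'. map_pmf (\<lambda>e. f \<circ> apply_event e s') p)"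
    by (simp add: bind_map_pmf apply_event_comp)
  also have "\<dots> = map_pmf (\<lambda>b. f \<circ> b) (chain p (Suc t) s)"
    by (simp add: map_bind_pmf pmf.map_comp o_def)
  finally show ?case .
qed

lemma prob_le_prob_bind_pmf_if_closed:
  assumes closed: "\<And>x y. x \<in> A \<Longrightarrow> y \<in> set_pmf (f x) \<Longrightarrow> y \<in> A"
  shows "measure_pmf.prob M A \<le> measure_pmf.prob (bind_pmf M f) A"
proof -
  have "indicator A x \<le> emeasure (measure_pmf (f x)) A" for x
  proof (cases "x \<in> A")
    case True
    then have "measure_pmf.prob (f x) A = 1"
      using closed by (subst measure_pmf.prob_eq_1) (auto simp: AE_measure_pmf_iff)
    then show ?thesis
      using True by (simp add: measure_pmf.emeasure_eq_measure)
  qed simp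
  then have "emeasure (measure_pmf M) A \<le> (\<integral>\<^sup>+x. emeasure (measure_pmf (f x)) A \<partial>M)"
    by (simp add: nn_integral_mono flip: nn_integral_indicator)
  also have "\<dots> = emeasure (measure_pmf (bind_pmf M f)) A"
    by simp
  finally show ?thesis
    by (simp add: measure_pmf.emeasure_eq_measure)
qed

lemma apply_event_monochromatic:
  assumes "valid_event N e" and "\<forall>j\<in>{1..N}. s j = c" and "j \<in> {1..N}"
  shows "apply_event e s j = c"
  using assms by (auto simp: valid_event_def apply_event_def)

lemma incseq_prob_all:
  assumes "replacement_rule N p"
  shows "incseq (prob_all N p s c)"
proof (rule incseq_SucI)
  fix t
  show "prob_all N p s c t \<le> prob_all N p s c (Suc t)"
    unfolding prob_all_def chain.simps
  proof (rule prob_le_prob_bind_pmf_if_closed)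
    fix x y
    assume x: "x \<in> {s. \<forall>j\<in>{1..N}. s j = c}"
      and "y \<in> set_pmf (map_pmf (\<lambda>e. apply_event e x) p)"
    then obtain e where "e \<in> set_pmf p" and y: "y = apply_event e x"
      by auto
    then have "valid_event N e"
      using assms by (simp add: replacement_rule_def)
    then show "y \<in> {s. \<forall>j\<in>{1..N}. s j = c}"
      using x unfolding y by (auto intro: apply_event_monochromatic)
  qed
qed

lemma convergent_prob_all:
  assumes "replacement_rule N p"
  shows "convergent (prob_all N p s c)"
proof -
  have "\<forall>t. prob_all N p s c t \<le> 1"
    by (simp add: prob_all_def)
  then show ?thesis
    using incseq_convergent[OF incseq_prob_all[OF assms]] by (metis convergent_def)
qed

lemma prob_all_m_state_eq_ancestral:
  "prob_all N p (m_state i) Mut t = prob_all N p (\<lambda>j::nat. j) i t"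
proof -
  have "chain p t (m_state i) = map_pmf (\<lambda>b. m_state i \<circ> b) (chain p t (\<lambda>j. j))"
    using chain_comp[of p t "m_state i" "\<lambda>j. j"] by (simp add: o_def)
  moreover have "(\<lambda>b. m_state i \<circ> b) -` {s. \<forall>j\<in>{1..N}. s j = Mut} = {s. \<forall>j\<in>{1..N}. s j = i}"
    by (auto simp: m_state_def split: if_splits)
  ultimately show ?thesis
    unfolding prob_all_def by simp
qed

theorem mainTheorem5:
  fixes N :: nat and p :: "event pmf" and i :: nat
  assumes "replacement_rule N p"
    and "fixation_assumption N p TYPE(nat)"
    and "i \<in> {1..N}"
  shows "\<exists>\<rho>. (prob_all N p (m_state i) Mut \<longlonglongrightarrow> \<rho>)
             \<and> (prob_all N p (\<lambda>j::nat. j) i \<longlonglongrightarrow> \<rho>)"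
proof -
  obtain \<rho> where "prob_all N p (\<lambda>j::nat. j) i \<longlonglongrightarrow> \<rho>"
    using convergent_prob_all[OF assms(1), of "\<lambda>j. j" i] by (auto simp: convergent_def)
  moreover have "prob_all N p (m_state i) Mut = prob_all N p (\<lambda>j::nat. j) i"
    using prob_all_m_state_eq_ancestral by blast
  ultimately show ?thesis
    by auto
qed

end
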